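(* Let $\mathcal{A}^{(+)}$ be the unital associative $\mathbb{C}$-algebra generated by $\nabla_0,\nabla_1,\nabla_2,\nabla_3$ with relations $[\nabla_0,\nabla_k]=[\nabla_\ell,\nabla_m]$ for every cyclic permutation $(k,\ell,m)$ of $(1,2,3)$. Let $L=L(\nabla_1,\nabla_2,\nabla_3)$ be the free Lie algebra on $\nabla_1,\nabla_2,\nabla_3$ (graded with generators in degree $1$), and let $\delta$ be the degree-one derivation of $L$ determined by $\delta(\nabla_k)=[\nabla_\ell,\nabla_m]$ for every cyclic permutation $(k,\ell,m)$ of $(1,2,3)$. Then $\mathcal{A}^{(+)}$ is isomorphic to the universal enveloping algebra of the semi-direct product graded Lie algebra $\mathbb{C}\delta\ltimes L$ (with $\delta$ of degree $1$ and $\nabla_0$ corresponding to $\delta$). *)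

theory Defs
  imports Complex_Main
begin

definition fsupp :: "('a \<Rightarrow> complex) \<Rightarrow> bool" where
  "fsupp f \<longleftrightarrow> finite {x. f x \<noteq> 0}"

definition vzero :: "'a \<Rightarrow> complex" where "vzero = (\<lambda>_. 0)"
definition vadd :: "('a \<Rightarrow> complex) \<Rightarrow> ('a \<Rightarrow> complex) \<Rightarrow> 'a \<Rightarrow> complex" where
  "vadd f g = (\<lambda>x. f x + g x)"
definition vdiff :: "('a \<Rightarrow> complex) \<Rightarrow> ('a \<Rightarrow> complex) \<Rightarrow> 'a \<Rightarrow> complex" where
  "vdiff f g = (\<lambda>x. f x - g x)"
definition vscal :: "complex \<Rightarrow> ('a \<Rightarrow> complex) \<Rightarrow> 'a \<Rightarrow> complex" where
  "vscal c f = (\<lambda>x. c * f x)"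

definition FA :: "'x set \<Rightarrow> ('x list \<Rightarrow> complex) set" where
  "FA S = {p. fsupp p \<and> (\<forall>w. p w \<noteq> 0 \<longrightarrow> set w \<subseteq> S)}"

definition fa_one :: "'x list \<Rightarrow> complex" where
  "fa_one = (\<lambda>w. if w = [] then 1 else 0)"

definition fa_gen :: "'x \<Rightarrow> 'x list \<Rightarrow> complex" where
  "fa_gen x = (\<lambda>w. if w = [x] then 1 else 0)"

definition fa_mult :: "('x list \<Rightarrow> complex) \<Rightarrow> ('x list \<Rightarrow> complex) \<Rightarrow> 'x list \<Rightarrow> complex" where
  "fa_mult p q = (\<lambda>w. \<Sum>i\<le>length w. p (take i w) * q (drop i w))"

definition fa_comm :: "('x list \<Rightarrow> complex) \<Rightarrow> ('x list \<Rightarrow> complex) \<Rightarrow> 'x list \<Rightarrow> complex" where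
  "fa_comm p q = vdiff (fa_mult p q) (fa_mult q p)"

inductive_set fa_ideal :: "'x set \<Rightarrow> ('x list \<Rightarrow> complex) set \<Rightarrow> ('x list \<Rightarrow> complex) set"
  for S R where
  zero: "vzero \<in> fa_ideal S R"
| gen: "r \<in> R \<Longrightarrow> r \<in> fa_ideal S R"
| add: "p \<in> fa_ideal S R \<Longrightarrow> q \<in> fa_ideal S R \<Longrightarrow> vadd p q \<in> fa_ideal S R"
| lmult: "a \<in> FA S \<Longrightarrow> p \<in> fa_ideal S R \<Longrightarrow> fa_mult a p \<in> fa_ideal S R"
| rmult: "a \<in> FA S \<Longrightarrow> p \<in> fa_ideal S R \<Longrightarrow> fa_mult p a \<in> fa_ideal S R"

definition quot_alg_iso ::
  "'x set \<Rightarrow> ('x list \<Rightarrow> complex) set \<Rightarrow> 'y set \<Rightarrow> ('y list \<Rightarrow> complex) set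
   \<Rightarrow> (('x list \<Rightarrow> complex) \<Rightarrow> ('y list \<Rightarrow> complex)) \<Rightarrow> bool" where
  "quot_alg_iso S1 I1 S2 I2 \<phi> \<longleftrightarrow>
     (\<forall>p\<in>FA S1. \<phi> p \<in> FA S2) \<and>
     (\<forall>p\<in>FA S1. \<forall>q\<in>FA S1. \<phi> (vadd p q) = vadd (\<phi> p) (\<phi> q)) \<and>
     (\<forall>c. \<forall>p\<in>FA S1. \<phi> (vscal c p) = vscal c (\<phi> p)) \<and>
     (\<forall>p\<in>FA S1. \<forall>q\<in>FA S1. \<phi> (fa_mult p q) = fa_mult (\<phi> p) (\<phi> q)) \<and>
     \<phi> fa_one = fa_one \<and>
     (\<forall>p\<in>FA S1. \<phi> p \<in> I2 \<longleftrightarrow> p \<in> I1) \<and>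
     (\<forall>q\<in>FA S2. \<exists>p\<in>FA S1. vdiff q (\<phi> p) \<in> I2)"

definition cyc :: "(nat \<times> nat \<times> nat) set" where
  "cyc = {(1,2,3), (2,3,1), (3,1,2)}"

definition Aplus_rels :: "(nat list \<Rightarrow> complex) set" where
  "Aplus_rels = {vdiff (fa_comm (fa_gen 0) (fa_gen k)) (fa_comm (fa_gen l) (fa_gen m)) | k l m.
                   (k, l, m) \<in> cyc}"

definition Aplus_ideal :: "(nat list \<Rightarrow> complex) set" where
  "Aplus_ideal = fa_ideal {0,1,2,3} Aplus_rels"

section \<open>Free Lie algebra on a set S (free nonassociative algebra modulo alternativity and Jacobi)\<close>

datatype 'x mtree = Leaf 'x | Node "'x mtree" "'x mtree"

definition FM :: "'x set \<Rightarrow> ('x mtree \<Rightarrow> complex) set" where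
  "FM S = {p. fsupp p \<and> (\<forall>t. p t \<noteq> 0 \<longrightarrow> set_mtree t \<subseteq> S)}"

definition fm_single :: "'x mtree \<Rightarrow> 'x mtree \<Rightarrow> complex" where
  "fm_single t = (\<lambda>s. if s = t then 1 else 0)"

definition fm_mult :: "('x mtree \<Rightarrow> complex) \<Rightarrow> ('x mtree \<Rightarrow> complex) \<Rightarrow> 'x mtree \<Rightarrow> complex" where
  "fm_mult p q = (\<lambda>t. case t of Leaf _ \<Rightarrow> 0 | Node a b \<Rightarrow> p a * q b)"

definition fm_jacobi :: "('x mtree \<Rightarrow> complex) \<Rightarrow> ('x mtree \<Rightarrow> complex) \<Rightarrow> ('x mtree \<Rightarrow> complex)
    \<Rightarrow> 'x mtree \<Rightarrow> complex" where
  "fm_jacobi a b c = vadd (vadd (fm_mult (fm_mult a b) c) (fm_mult (fm_mult b c) a))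
                          (fm_mult (fm_mult c a) b)"

inductive_set lie_ideal :: "'x set \<Rightarrow> ('x mtree \<Rightarrow> complex) set" for S where
  zero: "vzero \<in> lie_ideal S"
| add: "p \<in> lie_ideal S \<Longrightarrow> q \<in> lie_ideal S \<Longrightarrow> vadd p q \<in> lie_ideal S"
| scal: "p \<in> lie_ideal S \<Longrightarrow> vscal c p \<in> lie_ideal S"
| alt: "a \<in> FM S \<Longrightarrow> fm_mult a a \<in> lie_ideal S"
| jac: "a \<in> FM S \<Longrightarrow> b \<in> FM S \<Longrightarrow> c \<in> FM S \<Longrightarrow> fm_jacobi a b c \<in> lie_ideal S"
| lmult: "a \<in> FM S \<Longrightarrow> p \<in> lie_ideal S \<Longrightarrow> fm_mult a p \<in> lie_ideal S"
| rmult: "a \<in> FM S \<Longrightarrow> p \<in> lie_ideal S \<Longrightarrow> fm_mult p a \<in> lie_ideal S"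

definition fl_class :: "'x set \<Rightarrow> ('x mtree \<Rightarrow> complex) \<Rightarrow> ('x mtree \<Rightarrow> complex) set" where
  "fl_class S p = {q \<in> FM S. vdiff q p \<in> lie_ideal S}"

definition FL :: "'x set \<Rightarrow> ('x mtree \<Rightarrow> complex) set set" where
  "FL S = fl_class S ` FM S"

definition fl_rep :: "('x mtree \<Rightarrow> complex) set \<Rightarrow> 'x mtree \<Rightarrow> complex" where
  "fl_rep X = (SOME p. p \<in> X)"

definition fl_zero :: "'x set \<Rightarrow> ('x mtree \<Rightarrow> complex) set" where
  "fl_zero S = fl_class S vzero"
definition fl_add :: "'x set \<Rightarrow> ('x mtree \<Rightarrow> complex) set \<Rightarrow> ('x mtree \<Rightarrow> complex) set
    \<Rightarrow> ('x mtree \<Rightarrow> complex) set" where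
  "fl_add S X Y = fl_class S (vadd (fl_rep X) (fl_rep Y))"
definition fl_scal :: "'x set \<Rightarrow> complex \<Rightarrow> ('x mtree \<Rightarrow> complex) set \<Rightarrow> ('x mtree \<Rightarrow> complex) set" where
  "fl_scal S c X = fl_class S (vscal c (fl_rep X))"
definition fl_bracket :: "'x set \<Rightarrow> ('x mtree \<Rightarrow> complex) set \<Rightarrow> ('x mtree \<Rightarrow> complex) set
    \<Rightarrow> ('x mtree \<Rightarrow> complex) set" where
  "fl_bracket S X Y = fl_class S (fm_mult (fl_rep X) (fl_rep Y))"

definition S3 :: "nat set" where "S3 = {1,2,3}"

primrec dtree :: "nat mtree \<Rightarrow> nat mtree \<Rightarrow> complex" where
  "dtree (Leaf k) =
     (if k = 1 then fm_single (Node (Leaf 2) (Leaf 3))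
      else if k = 2 then fm_single (Node (Leaf 3) (Leaf 1))
      else if k = 3 then fm_single (Node (Leaf 1) (Leaf 2))
      else vzero)"
| "dtree (Node a b) = vadd (fm_mult (dtree a) (fm_single b)) (fm_mult (fm_single a) (dtree b))"

definition fm_der :: "(nat mtree \<Rightarrow> complex) \<Rightarrow> nat mtree \<Rightarrow> complex" where
  "fm_der p = (\<lambda>t. \<Sum>s\<in>{s. p s \<noteq> 0}. p s * dtree s t)"

definition fl_delta :: "(nat mtree \<Rightarrow> complex) set \<Rightarrow> (nat mtree \<Rightarrow> complex) set" where
  "fl_delta X = fl_class S3 (fm_der (fl_rep X))"

type_synonym gelt = "complex \<times> (nat mtree \<Rightarrow> complex) set"

definition gcar :: "gelt set" where "gcar = UNIV \<times> FL S3"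

definition g_add :: "gelt \<Rightarrow> gelt \<Rightarrow> gelt" where
  "g_add u v = (fst u + fst v, fl_add S3 (snd u) (snd v))"
definition g_scal :: "complex \<Rightarrow> gelt \<Rightarrow> gelt" where
  "g_scal a u = (a * fst u, fl_scal S3 a (snd u))"
text \<open>[c delta + X, d delta + Y] = c delta(Y) - d delta(X) + [X,Y].\<close>
definition g_bracket :: "gelt \<Rightarrow> gelt \<Rightarrow> gelt" where
  "g_bracket u v = (0, fl_add S3 (fl_add S3 (fl_scal S3 (fst u) (fl_delta (snd v)))
                                          (fl_scal S3 (- fst v) (fl_delta (snd u))))
                                 (fl_bracket S3 (snd u) (snd v)))"
definition g_delta :: gelt where "g_delta = (1, fl_zero S3)"
definition g_gen :: "nat \<Rightarrow> gelt" where
  "g_gen k = (0, fl_class S3 (fm_single (Leaf k)))"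

text \<open>U(g) = tensor algebra T(g) (free algebra on the elements of g modulo linearity)
  modulo x y - y x - [x,y].\<close>
definition U_rels :: "(gelt list \<Rightarrow> complex) set" where
  "U_rels =
     {vdiff (fa_gen (g_add u v)) (vadd (fa_gen u) (fa_gen v)) | u v. u \<in> gcar \<and> v \<in> gcar}
   \<union> {vdiff (fa_gen (g_scal c u)) (vscal c (fa_gen u)) | c u. u \<in> gcar}
   \<union> {vdiff (fa_comm (fa_gen u) (fa_gen v)) (fa_gen (g_bracket u v)) | u v. u \<in> gcar \<and> v \<in> gcar}"

definition U_ideal :: "(gelt list \<Rightarrow> complex) set" where
  "U_ideal = fa_ideal gcar U_rels"

end

theory Submission
  imports Defs "HOL-Library.Function_Algebras"
begin

text \<open>
  Send \<open>\<nabla>\<^sub>0\<close> to \<open>\<delta>\<close> and \<open>\<nabla>\<^sub>k\<close> to \<open>\<nabla>\<^sub>k\<close>; in the other direction send \<open>c \<delta> + X\<close> to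
  \<open>c \<nabla>\<^sub>0 + \<Lambda>(X)\<close>, where \<open>\<Lambda>\<close> evaluates a bracket tree as an iterated commutator of the \<open>\<nabla>\<^sub>k\<close>.
  Commutators satisfy antisymmetry and the Jacobi identity, so \<open>\<Lambda>\<close> vanishes on the Lie ideal
  and is well defined on the free Lie algebra. The defining relations of \<open>\<A>\<^sup>(\<^sup>+\<^sup>)\<close> say exactly
  \<open>[\<nabla>\<^sub>0, \<Lambda>(\<nabla>\<^sub>k)] = \<Lambda>(\<delta> \<nabla>\<^sub>k)\<close>; since both \<open>[\<nabla>\<^sub>0, -]\<close> and \<open>\<delta>\<close> are derivations, this propagates to
  \<open>[\<nabla>\<^sub>0, \<Lambda>(X)] = \<Lambda>(\<delta> X)\<close> for all \<open>X\<close>, which is what the bracket relations of the enveloping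
  algebra require. Conversely \<open>\<delta>(\<nabla>\<^sub>k) = [\<nabla>\<^sub>l, \<nabla>\<^sub>m]\<close> makes the relations of \<open>\<A>\<^sup>(\<^sup>+\<^sup>)\<close> hold in
  \<open>U(\<complex>\<delta> \<ltimes> L)\<close>. The two substitution homomorphisms are inverse to each other on generators,
  exactly in one direction and modulo the linearity relations of \<open>U\<close> in the other.
\<close>

lemma vadd_eq: "vadd p q = p + q" by (simp add: vadd_def plus_fun_def)
lemma vdiff_eq: "vdiff p q = p - q" by (simp add: vdiff_def fun_diff_def)
lemma vzero_eq: "vzero = 0" by (simp add: vzero_def zero_fun_def)

text \<open>Vectors are compared as whole functions: pointwise evaluation of sums is not a simp rule.\<close>
lemmas fun_apply_simps = plus_fun_apply minus_apply uminus_apply zero_fun_apply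
declare plus_fun_apply[simp del] minus_apply[simp del] uminus_apply[simp del] zero_fun_apply[simp del]

definition single :: "'a \<Rightarrow> 'a \<Rightarrow> complex" where
  "single t = (\<lambda>x. if x = t then 1 else 0)"

lemma fa_gen_eq_single: "fa_gen x = single [x]" by (simp add: fa_gen_def single_def)
lemma fa_one_eq_single: "fa_one = single []" by (simp add: fa_one_def single_def)
lemma fm_single_eq_single: "fm_single t = single t" by (simp add: fm_single_def single_def)
lemma fa_comm_eq: "fa_comm p q = fa_mult p q - fa_mult q p" by (simp add: fa_comm_def vdiff_eq)

lemma fsupp_zero[simp]: "fsupp (0::'a \<Rightarrow> complex)" by (simp add: fsupp_def fun_apply_simps)
lemma fsupp_single[simp]: "fsupp (single t)" by (simp add: fsupp_def single_def)
lemma fsupp_add[simp]: "fsupp p \<Longrightarrow> fsupp q \<Longrightarrow> fsupp (p + q)"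
  unfolding fsupp_def
  by (rule finite_subset[of _ "{x. p x \<noteq> 0} \<union> {x. q x \<noteq> 0}"]) (auto simp: fun_apply_simps)
lemma fsupp_diff[simp]: "fsupp p \<Longrightarrow> fsupp q \<Longrightarrow> fsupp (p - q)"
  unfolding fsupp_def
  by (rule finite_subset[of _ "{x. p x \<noteq> 0} \<union> {x. q x \<noteq> 0}"]) (auto simp: fun_apply_simps)
lemma fsupp_vscal[simp]: "fsupp p \<Longrightarrow> fsupp (vscal c p)"
  unfolding fsupp_def vscal_def by (rule finite_subset[of _ "{x. p x \<noteq> 0}"]) auto

lemma vscal_add: "vscal c (p + q) = vscal c p + vscal c q"
  by (simp add: vscal_def fun_eq_iff fun_apply_simps algebra_simps)
lemma vscal_diff: "vscal c (p - q) = vscal c p - vscal c q"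
  by (simp add: vscal_def fun_eq_iff fun_apply_simps algebra_simps)
lemma vscal_uminus: "vscal c (- p) = - vscal c p"
  by (simp add: vscal_def fun_eq_iff fun_apply_simps)
lemma vscal_zero[simp]: "vscal c 0 = 0" by (simp add: vscal_def fun_eq_iff fun_apply_simps)
lemma vscal_0[simp]: "vscal 0 p = 0" by (simp add: vscal_def fun_eq_iff fun_apply_simps)
lemma vscal_1[simp]: "vscal 1 p = p" by (simp add: vscal_def fun_eq_iff)
lemma vscal_vscal: "vscal a (vscal b p) = vscal (a * b) p" by (simp add: vscal_def fun_eq_iff)
lemma vscal_add_left: "vscal (a + b) p = vscal a p + vscal b p"
  by (simp add: vscal_def fun_eq_iff fun_apply_simps algebra_simps)
lemma vscal_minus_one: "vscal (-1) p = - p" by (simp add: vscal_def fun_eq_iff fun_apply_simps)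
lemma vscal_uminus_left: "vscal (- a) p = - vscal a p" by (simp add: vscal_def fun_eq_iff fun_apply_simps)

lemma fsupp_support_induct[consumes 2, case_names zero step]:
  assumes "fsupp p" "\<forall>t. p t \<noteq> 0 \<longrightarrow> Q t"
    and "P 0"
    and "\<And>q c t. fsupp q \<Longrightarrow> \<forall>s. q s \<noteq> 0 \<longrightarrow> Q s \<Longrightarrow> Q t \<Longrightarrow> P q \<Longrightarrow> P (q + vscal c (single t))"
  shows "P p"
proof -
  have "\<And>p. {x. p x \<noteq> 0} \<subseteq> D \<Longrightarrow> \<forall>t. p t \<noteq> 0 \<longrightarrow> Q t \<Longrightarrow> P p" if "finite D" for D
    using that
  proof (induction D rule: finite_induct)
    case empty
    then have "p = 0" by (auto simp: fun_eq_iff fun_apply_simps)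
    then show ?case using assms(3) by (simp only:)
  next
    case (insert t D)
    define q where "q = p(t := 0)"
    have supp_q: "{x. q x \<noteq> 0} \<subseteq> D" using insert.prems(1) by (auto simp: q_def)
    have Q_q: "\<forall>s. q s \<noteq> 0 \<longrightarrow> Q s" using insert.prems(2) by (simp add: q_def)
    have "P q" using insert.IH[OF supp_q] Q_q by blast
    have "fsupp q" using supp_q insert.hyps(1) by (simp add: fsupp_def finite_subset)
    show ?case
    proof (cases "p t = 0")
      case True
      then have "p = q" by (auto simp: q_def fun_eq_iff)
      then show ?thesis using \<open>P q\<close> by simp
    next
      case False
      then have "p = q + vscal (p t) (single t)"
        by (auto simp: q_def fun_eq_iff fun_apply_simps vscal_def single_def)
      then show ?thesis
        using assms(4)[OF \<open>fsupp q\<close> Q_q, of t "p t"] False insert.prems(2) \<open>P q\<close> by auto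
    qed
  qed
  then show ?thesis using assms(1,2) by (auto simp: fsupp_def)
qed

lemma fsupp_induct[consumes 1, case_names zero step]:
  assumes "fsupp p" "P 0"
    and "\<And>q c t. fsupp q \<Longrightarrow> P q \<Longrightarrow> P (q + vscal c (single t))"
  shows "P p"
  using assms(1) _ assms(2) by (rule fsupp_support_induct[where Q="\<lambda>_. True"]) (blast intro: assms(3))+

definition lin_ext :: "('a \<Rightarrow> 'b \<Rightarrow> complex) \<Rightarrow> ('a \<Rightarrow> complex) \<Rightarrow> 'b \<Rightarrow> complex" where
  "lin_ext g p = (\<lambda>x. \<Sum>t\<in>{t. p t \<noteq> 0}. p t * g t x)"

lemma lin_ext_superset:
  "finite D \<Longrightarrow> {t. p t \<noteq> 0} \<subseteq> D \<Longrightarrow> lin_ext g p = (\<lambda>x. \<Sum>t\<in>D. p t * g t x)"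
  unfolding lin_ext_def by (rule ext, rule sum.mono_neutral_left) auto

lemma lin_ext_add: "fsupp p \<Longrightarrow> fsupp q \<Longrightarrow> lin_ext g (p + q) = lin_ext g p + lin_ext g q"
proof -
  assume "fsupp p" "fsupp q"
  let ?D = "{t. p t \<noteq> 0} \<union> {t. q t \<noteq> 0}"
  have D: "finite ?D" using \<open>fsupp p\<close> \<open>fsupp q\<close> by (simp add: fsupp_def)
  have "lin_ext g (p + q) = (\<lambda>x. \<Sum>t\<in>?D. (p + q) t * g t x)"
    by (rule lin_ext_superset[OF D]) (auto simp: fun_apply_simps)
  moreover have "lin_ext g p = (\<lambda>x. \<Sum>t\<in>?D. p t * g t x)" by (rule lin_ext_superset[OF D]) auto
  moreover have "lin_ext g q = (\<lambda>x. \<Sum>t\<in>?D. q t * g t x)" by (rule lin_ext_superset[OF D]) auto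
  ultimately show ?thesis by (simp add: fun_eq_iff fun_apply_simps distrib_right sum.distrib)
qed

lemma lin_ext_vscal: "fsupp p \<Longrightarrow> lin_ext g (vscal c p) = vscal c (lin_ext g p)"
proof -
  assume "fsupp p"
  then have "lin_ext g (vscal c p) = (\<lambda>x. \<Sum>t\<in>{t. p t \<noteq> 0}. vscal c p t * g t x)"
    by (intro lin_ext_superset) (auto simp: fsupp_def vscal_def)
  then show ?thesis by (simp add: lin_ext_def vscal_def fun_eq_iff sum_distrib_left mult.assoc)
qed

lemma lin_ext_diff: "fsupp p \<Longrightarrow> fsupp q \<Longrightarrow> lin_ext g (p - q) = lin_ext g p - lin_ext g q"
  using lin_ext_add[of "p - q" q g] by (simp add: eq_diff_eq)

lemma lin_ext_zero[simp]: "lin_ext g 0 = 0"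
  by (simp add: lin_ext_def fun_eq_iff fun_apply_simps)

lemma lin_ext_single[simp]: "lin_ext g (single t) = g t"
proof -
  have "lin_ext g (single t) = (\<lambda>x. \<Sum>s\<in>{t}. single t s * g s x)"
    by (rule lin_ext_superset) (auto simp: single_def)
  then show ?thesis by (simp add: single_def)
qed

lemma lin_ext_step: "fsupp q \<Longrightarrow> lin_ext g (q + vscal c (single t)) = lin_ext g q + vscal c (g t)"
  by (simp add: lin_ext_add lin_ext_vscal)

lemma lin_ext_cong: "(\<And>t. p t \<noteq> 0 \<Longrightarrow> g t = h t) \<Longrightarrow> lin_ext g p = lin_ext h p"
  by (simp add: lin_ext_def)

lemma lin_ext_single_basis: "fsupp p \<Longrightarrow> lin_ext single p = p"
  by (induction rule: fsupp_induct) (simp_all add: lin_ext_step)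

lemma fa_mult_add_left: "fa_mult (p + q) r = fa_mult p r + fa_mult q r"
  by (simp add: fa_mult_def fun_eq_iff fun_apply_simps distrib_right sum.distrib)
lemma fa_mult_add_right: "fa_mult r (p + q) = fa_mult r p + fa_mult r q"
  by (simp add: fa_mult_def fun_eq_iff fun_apply_simps distrib_left sum.distrib)
lemma fa_mult_diff_left: "fa_mult (p - q) r = fa_mult p r - fa_mult q r"
  by (simp add: fa_mult_def fun_eq_iff fun_apply_simps left_diff_distrib sum_subtractf)
lemma fa_mult_diff_right: "fa_mult r (p - q) = fa_mult r p - fa_mult r q"
  by (simp add: fa_mult_def fun_eq_iff fun_apply_simps right_diff_distrib sum_subtractf)
lemma fa_mult_vscal_left: "fa_mult (vscal c p) r = vscal c (fa_mult p r)"
  by (simp add: fa_mult_def fun_eq_iff vscal_def sum_distrib_left mult.assoc)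
lemma fa_mult_vscal_right: "fa_mult r (vscal c p) = vscal c (fa_mult r p)"
  by (simp add: fa_mult_def fun_eq_iff vscal_def sum_distrib_left mult.left_commute)
lemma fa_mult_zero_left[simp]: "fa_mult 0 r = 0"
  by (simp add: fa_mult_def fun_eq_iff fun_apply_simps)
lemma fa_mult_zero_right[simp]: "fa_mult r 0 = 0"
  by (simp add: fa_mult_def fun_eq_iff fun_apply_simps)
lemma fa_mult_uminus_left: "fa_mult (- p) r = - fa_mult p r"
  using fa_mult_diff_left[of 0 p r] by simp
lemma fa_mult_uminus_right: "fa_mult r (- p) = - fa_mult r p"
  using fa_mult_diff_right[of r 0 p] by simp

lemmas fa_mult_linear = fa_mult_add_left fa_mult_add_right fa_mult_diff_left fa_mult_diff_right
  fa_mult_vscal_left fa_mult_vscal_right fa_mult_uminus_left fa_mult_uminus_right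

lemma fa_mult_single: "fa_mult (single u) (single v) = single (u @ v)"
proof (rule ext)
  fix w :: "'a list"
  have split_iff: "take i w = u \<and> drop i w = v \<longleftrightarrow> i = length u \<and> w = u @ v" if "i \<le> length w" for i
    using that by (metis append_eq_conv_conj length_take min.absorb2)
  have "fa_mult (single u) (single v) w = (\<Sum>i\<le>length w. if i = length u \<and> w = u @ v then 1 else 0)"
    unfolding fa_mult_def single_def by (rule sum.cong[OF refl]) (use split_iff in auto)
  also have "\<dots> = single (u @ v) w"
    by (auto simp: single_def)
  finally show "fa_mult (single u) (single v) w = single (u @ v) w" .
qed

lemma fa_mult_nonzero:
  assumes "fa_mult p q w \<noteq> 0"
  obtains u v where "w = u @ v" "p u \<noteq> 0" "q v \<noteq> 0"
proof -
  from assms obtain i where "p (take i w) * q (drop i w) \<noteq> 0"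
    unfolding fa_mult_def by (meson sum.not_neutral_contains_not_neutral)
  then show ?thesis by (intro that[of "take i w" "drop i w"]) auto
qed

lemma fsupp_fa_mult[simp]: "fsupp p \<Longrightarrow> fsupp q \<Longrightarrow> fsupp (fa_mult p q)"
  unfolding fsupp_def
  by (rule finite_subset[of _ "(\<lambda>(u, v). u @ v) ` ({x. p x \<noteq> 0} \<times> {x. q x \<noteq> 0})"])
     (auto elim!: fa_mult_nonzero)

lemma fsupp_fa_comm[simp]: "fsupp p \<Longrightarrow> fsupp q \<Longrightarrow> fsupp (fa_comm p q)"
  by (simp add: fa_comm_eq)

lemma fa_mult_one_left: "fsupp p \<Longrightarrow> fa_mult (single []) p = p"
  by (induction rule: fsupp_induct) (simp_all add: fa_mult_linear fa_mult_single)

lemma fa_mult_one_right: "fsupp p \<Longrightarrow> fa_mult p (single []) = p"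
  by (induction rule: fsupp_induct) (simp_all add: fa_mult_linear fa_mult_single)

lemma fa_mult_assoc:
  assumes "fsupp p" "fsupp q" "fsupp r"
  shows "fa_mult (fa_mult p q) r = fa_mult p (fa_mult q r)"
proof -
  have words: "fa_mult (fa_mult (single u) (single v)) r = fa_mult (single u) (fa_mult (single v) r)"
    for u v using assms(3) by (induction rule: fsupp_induct) (simp_all add: fa_mult_linear fa_mult_single)
  have monomials: "fa_mult (fa_mult (single u) q) r = fa_mult (single u) (fa_mult q r)" for u
    using assms(2) by (induction rule: fsupp_induct) (simp_all add: fa_mult_linear words)
  show ?thesis
    using assms(1) by (induction rule: fsupp_induct) (simp_all add: fa_mult_linear monomials)
qed

lemma FA_fsupp: "p \<in> FA S \<Longrightarrow> fsupp p" by (simp add: FA_def)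
lemma FA_support: "p \<in> FA S \<Longrightarrow> p w \<noteq> 0 \<Longrightarrow> set w \<subseteq> S" by (simp add: FA_def)
lemma FA_zero[simp]: "0 \<in> FA S" by (simp add: FA_def fun_apply_simps)
lemma FA_single: "set w \<subseteq> S \<Longrightarrow> single w \<in> FA S" by (simp add: FA_def) (simp add: single_def)
lemma FA_add[simp]: "p \<in> FA S \<Longrightarrow> q \<in> FA S \<Longrightarrow> p + q \<in> FA S"
  unfolding FA_def by (simp add: fun_apply_simps) (metis add.right_neutral add_0)
lemma FA_diff[simp]: "p \<in> FA S \<Longrightarrow> q \<in> FA S \<Longrightarrow> p - q \<in> FA S"
  unfolding FA_def by (simp add: fun_apply_simps) (metis diff_0_right diff_self)
lemma FA_vscal[simp]: "p \<in> FA S \<Longrightarrow> vscal c p \<in> FA S"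
  unfolding FA_def by (simp add: vscal_def) (auto simp: fsupp_vscal[unfolded vscal_def])
lemma FA_fa_mult[simp]: "p \<in> FA S \<Longrightarrow> q \<in> FA S \<Longrightarrow> fa_mult p q \<in> FA S"
  by (auto simp: FA_def elim!: fa_mult_nonzero) blast+
lemma FA_fa_comm[simp]: "p \<in> FA S \<Longrightarrow> q \<in> FA S \<Longrightarrow> fa_comm p q \<in> FA S"
  by (simp add: fa_comm_eq)
lemma FA_mono: "p \<in> FA S \<Longrightarrow> S \<subseteq> T \<Longrightarrow> p \<in> FA T"
  by (auto simp: FA_def)

lemma FA_induct[consumes 1, case_names zero step]:
  assumes "p \<in> FA S" "P 0"
    and "\<And>q c w. q \<in> FA S \<Longrightarrow> set w \<subseteq> S \<Longrightarrow> P q \<Longrightarrow> P (q + vscal c (single w))"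
  shows "P p"
proof -
  have "fsupp p" "\<forall>w. p w \<noteq> 0 \<longrightarrow> set w \<subseteq> S" using assms(1) by (simp_all add: FA_def)
  then show ?thesis
  proof (induction rule: fsupp_support_induct)
    case (step q c w) then show ?case by (intro assms(3)) (simp_all add: FA_def)
  qed (fact assms(2))
qed

lemma fa_comm_add_left: "fa_comm (p + q) r = fa_comm p r + fa_comm q r"
  by (simp add: fa_comm_eq fa_mult_linear)
lemma fa_comm_add_right: "fa_comm r (p + q) = fa_comm r p + fa_comm r q"
  by (simp add: fa_comm_eq fa_mult_linear)
lemma fa_comm_diff_left: "fa_comm (p - q) r = fa_comm p r - fa_comm q r"
  by (simp add: fa_comm_eq fa_mult_linear)
lemma fa_comm_diff_right: "fa_comm r (p - q) = fa_comm r p - fa_comm r q"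
  by (simp add: fa_comm_eq fa_mult_linear)
lemma fa_comm_vscal_left: "fa_comm (vscal c p) r = vscal c (fa_comm p r)"
  by (simp add: fa_comm_eq fa_mult_linear vscal_diff)
lemma fa_comm_vscal_right: "fa_comm r (vscal c p) = vscal c (fa_comm r p)"
  by (simp add: fa_comm_eq fa_mult_linear vscal_diff)
lemma fa_comm_zero_left[simp]: "fa_comm 0 r = 0" by (simp add: fa_comm_eq)
lemma fa_comm_zero_right[simp]: "fa_comm r 0 = 0" by (simp add: fa_comm_eq)
lemma fa_comm_self[simp]: "fa_comm r r = 0" by (simp add: fa_comm_eq)
lemma fa_comm_swap: "fa_comm a b = - fa_comm b a" by (simp add: fa_comm_eq)

lemmas fa_comm_linear = fa_comm_add_left fa_comm_add_right fa_comm_diff_left fa_comm_diff_right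
  fa_comm_vscal_left fa_comm_vscal_right

lemma fa_comm_jacobi:
  "fsupp a \<Longrightarrow> fsupp b \<Longrightarrow> fsupp c \<Longrightarrow>
   fa_comm (fa_comm a b) c + fa_comm (fa_comm b c) a + fa_comm (fa_comm c a) b = 0"
  by (simp add: fa_comm_eq fa_mult_linear fa_mult_assoc)

lemma fa_comm_leibniz:
  "fsupp a \<Longrightarrow> fsupp b \<Longrightarrow> fsupp c \<Longrightarrow>
   fa_comm a (fa_comm b c) = fa_comm (fa_comm a b) c + fa_comm b (fa_comm a c)"
  by (simp add: fa_comm_eq fa_mult_linear fa_mult_assoc)

lemma fa_ideal_FA: assumes "R \<subseteq> FA S" "p \<in> fa_ideal S R" shows "p \<in> FA S"
  using assms(2) by (induction rule: fa_ideal.induct) (use assms(1) in \<open>auto simp: vzero_eq vadd_eq\<close>)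

lemma fa_ideal_zero[simp]: "0 \<in> fa_ideal S R"
  using fa_ideal.zero by (simp add: vzero_eq)

lemma fa_ideal_add: "p \<in> fa_ideal S R \<Longrightarrow> q \<in> fa_ideal S R \<Longrightarrow> p + q \<in> fa_ideal S R"
  using fa_ideal.add by (simp add: vadd_eq)

lemma fa_ideal_vscal:
  assumes "R \<subseteq> FA S" "p \<in> fa_ideal S R"
  shows "vscal c p \<in> fa_ideal S R"
proof -
  have "fa_mult (vscal c (single [])) p \<in> fa_ideal S R"
    using assms(2) by (intro fa_ideal.lmult FA_vscal FA_single) auto
  moreover have "fa_mult (vscal c (single [])) p = vscal c p"
    using fa_ideal_FA[OF assms] by (simp add: fa_mult_vscal_left fa_mult_one_left FA_fsupp)
  ultimately show ?thesis by simp
qed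

lemma fa_ideal_uminus: "R \<subseteq> FA S \<Longrightarrow> p \<in> fa_ideal S R \<Longrightarrow> - p \<in> fa_ideal S R"
  using fa_ideal_vscal[of R S p "-1"] by (simp add: vscal_minus_one)

lemma fa_ideal_diff: "R \<subseteq> FA S \<Longrightarrow> p \<in> fa_ideal S R \<Longrightarrow> q \<in> fa_ideal S R \<Longrightarrow> p - q \<in> fa_ideal S R"
  using fa_ideal_add[of p S R "- q"] fa_ideal_uminus[of R S q] by simp

lemma fa_ideal_comm_left: "R \<subseteq> FA S \<Longrightarrow> a \<in> FA S \<Longrightarrow> p \<in> fa_ideal S R \<Longrightarrow> fa_comm p a \<in> fa_ideal S R"
  by (simp add: fa_comm_eq fa_ideal_diff fa_ideal.lmult fa_ideal.rmult)

lemma fa_ideal_comm_right: "R \<subseteq> FA S \<Longrightarrow> a \<in> FA S \<Longrightarrow> p \<in> fa_ideal S R \<Longrightarrow> fa_comm a p \<in> fa_ideal S R"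
  by (simp add: fa_comm_eq fa_ideal_diff fa_ideal.lmult fa_ideal.rmult)

lemma fa_ideal_diff_trans: "a - b \<in> fa_ideal S R \<Longrightarrow> b - c \<in> fa_ideal S R \<Longrightarrow> a - c \<in> fa_ideal S R"
  using fa_ideal_add[of "a - b" S R "b - c"] by simp

lemma fa_ideal_diff_sym: "R \<subseteq> FA S \<Longrightarrow> a - b \<in> fa_ideal S R \<Longrightarrow> b - a \<in> fa_ideal S R"
  using fa_ideal_uminus[of R S "a - b"] by simp

lemma fa_ideal_diff_add:
  "a - a' \<in> fa_ideal S R \<Longrightarrow> b - b' \<in> fa_ideal S R \<Longrightarrow> (a + b) - (a' + b') \<in> fa_ideal S R"
  using fa_ideal_add[of "a - a'" S R "b - b'"] by (simp add: algebra_simps)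

lemma fa_ideal_diff_vscal:
  "R \<subseteq> FA S \<Longrightarrow> a - a' \<in> fa_ideal S R \<Longrightarrow> vscal c a - vscal c a' \<in> fa_ideal S R"
  using fa_ideal_vscal[of R S "a - a'" c] by (simp add: vscal_diff)

lemma fa_ideal_diff_mult:
  assumes "R \<subseteq> FA S" "a \<in> FA S" "a' \<in> FA S" "b \<in> FA S" "b' \<in> FA S"
    "a - a' \<in> fa_ideal S R" "b - b' \<in> fa_ideal S R"
  shows "fa_mult a b - fa_mult a' b' \<in> fa_ideal S R"
proof -
  have "fa_mult a b - fa_mult a' b' = fa_mult (a - a') b + fa_mult a' (b - b')"
    by (simp add: fa_mult_linear)
  then show ?thesis using assms by (simp add: fa_ideal_add fa_ideal.lmult fa_ideal.rmult)
qed

lemma fa_ideal_diff_comm: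
  assumes "R \<subseteq> FA S" "a \<in> FA S" "a' \<in> FA S" "b \<in> FA S" "b' \<in> FA S"
    "a - a' \<in> fa_ideal S R" "b - b' \<in> fa_ideal S R"
  shows "fa_comm a b - fa_comm a' b' \<in> fa_ideal S R"
proof -
  have "fa_comm a b - fa_comm a' b' = (fa_mult a b - fa_mult a' b') - (fa_mult b a - fa_mult b' a')"
    by (simp add: fa_comm_eq)
  then show ?thesis using assms by (simp add: fa_ideal_diff fa_ideal_diff_mult)
qed

section \<open>Substitution homomorphisms between free algebras\<close>

primrec word_prod :: "('x \<Rightarrow> 'y list \<Rightarrow> complex) \<Rightarrow> 'x list \<Rightarrow> 'y list \<Rightarrow> complex" where
  "word_prod f [] = single []"
| "word_prod f (x # w) = fa_mult (f x) (word_prod f w)"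

definition fa_subst :: "('x \<Rightarrow> 'y list \<Rightarrow> complex) \<Rightarrow> ('x list \<Rightarrow> complex) \<Rightarrow> 'y list \<Rightarrow> complex" where
  "fa_subst f = lin_ext (word_prod f)"

lemma word_prod_FA: "\<forall>x\<in>set w. f x \<in> FA S' \<Longrightarrow> word_prod f w \<in> FA S'"
  by (induction w) (auto intro: FA_single)

lemma word_prod_append:
  "\<forall>x\<in>set (u @ v). f x \<in> FA S' \<Longrightarrow> word_prod f (u @ v) = fa_mult (word_prod f u) (word_prod f v)"
proof (induction u)
  case Nil then show ?case using word_prod_FA[of v f S'] by (simp add: fa_mult_one_left FA_fsupp)
next
  case (Cons x u)
  then have "fsupp (f x)" "fsupp (word_prod f u)" "fsupp (word_prod f v)"
    by (auto intro: word_prod_FA FA_fsupp)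
  then show ?case using Cons by (simp add: fa_mult_assoc)
qed

lemma word_prod_cong: "\<forall>x\<in>set w. f x = g x \<Longrightarrow> word_prod f w = word_prod g w"
  by (induction w) auto

lemma word_prod_single: "word_prod (\<lambda>x. single [x]) = single"
proof
  show "word_prod (\<lambda>x. single [x]) w = single w" for w
    by (induction w) (simp_all add: fa_mult_single)
qed

lemma lin_ext_FA: "fsupp p \<Longrightarrow> \<forall>t. p t \<noteq> 0 \<longrightarrow> g t \<in> FA S' \<Longrightarrow> lin_ext g p \<in> FA S'"
  by (induction rule: fsupp_support_induct) (simp_all add: lin_ext_step)

lemma fa_subst_FA: "p \<in> FA S \<Longrightarrow> \<forall>x\<in>S. f x \<in> FA S' \<Longrightarrow> fa_subst f p \<in> FA S'"
  unfolding fa_subst_def by (intro lin_ext_FA) (auto simp: FA_fsupp dest: FA_support intro!: word_prod_FA)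

lemma fa_subst_add: "fsupp p \<Longrightarrow> fsupp q \<Longrightarrow> fa_subst f (p + q) = fa_subst f p + fa_subst f q"
  by (simp add: fa_subst_def lin_ext_add)
lemma fa_subst_diff: "fsupp p \<Longrightarrow> fsupp q \<Longrightarrow> fa_subst f (p - q) = fa_subst f p - fa_subst f q"
  by (simp add: fa_subst_def lin_ext_diff)
lemma fa_subst_vscal: "fsupp p \<Longrightarrow> fa_subst f (vscal c p) = vscal c (fa_subst f p)"
  by (simp add: fa_subst_def lin_ext_vscal)
lemma fa_subst_single: "fa_subst f (single w) = word_prod f w"
  by (simp add: fa_subst_def)
lemma fa_subst_zero[simp]: "fa_subst f 0 = 0"
  by (simp add: fa_subst_def)

lemma fa_subst_gen: "fsupp (f x) \<Longrightarrow> fa_subst f (single [x]) = f x"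
  by (simp add: fa_subst_single fa_mult_one_right)

lemma fa_subst_cong: "p \<in> FA S \<Longrightarrow> \<forall>x\<in>S. f x = g x \<Longrightarrow> fa_subst f p = fa_subst g p"
  unfolding fa_subst_def by (intro lin_ext_cong word_prod_cong) (auto dest: FA_support)

lemma fa_subst_mult:
  assumes "p \<in> FA S" "q \<in> FA S" "\<forall>x\<in>S. f x \<in> FA S'"
  shows "fa_subst f (fa_mult p q) = fa_mult (fa_subst f p) (fa_subst f q)"
proof -
  have monomials: "fa_subst f (fa_mult (single u) q) = fa_mult (word_prod f u) (fa_subst f q)"
    if "set u \<subseteq> S" for u
    using assms(2)
  proof (induction rule: FA_induct)
    case (step q c t)
    have "fa_mult (single u) (q + vscal c (single t)) = fa_mult (single u) q + vscal c (single (u @ t))"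
      by (simp add: fa_mult_linear fa_mult_single)
    moreover have "word_prod f (u @ t) = fa_mult (word_prod f u) (word_prod f t)"
      using step that assms(3) by (intro word_prod_append[where S'=S']) auto
    ultimately show ?case
      using step by (simp add: fa_subst_add fa_subst_vscal fa_subst_single fa_mult_linear FA_fsupp)
  qed simp
  show ?thesis
    using assms(1)
  proof (induction rule: FA_induct)
    case (step p' c t)
    then show ?case using monomials[of t] assms(2)
      by (simp add: fa_subst_add fa_subst_vscal fa_subst_single fa_mult_linear FA_fsupp)
  qed simp
qed

lemma fa_subst_comm:
  "p \<in> FA S \<Longrightarrow> q \<in> FA S \<Longrightarrow> \<forall>x\<in>S. f x \<in> FA S' \<Longrightarrow>
   fa_subst f (fa_comm p q) = fa_comm (fa_subst f p) (fa_subst f q)"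
  by (simp add: fa_comm_eq fa_subst_diff fa_subst_mult FA_fsupp)

lemma fa_subst_word_prod:
  assumes "\<forall>x\<in>set w. f x \<in> FA S'" "\<forall>y\<in>S'. g y \<in> FA S''"
  shows "fa_subst g (word_prod f w) = word_prod (\<lambda>x. fa_subst g (f x)) w"
  using assms(1)
proof (induction w)
  case Nil then show ?case by (simp add: fa_subst_single)
next
  case (Cons x w)
  then have "f x \<in> FA S'" "word_prod f w \<in> FA S'" by (auto intro: word_prod_FA)
  then show ?case using Cons fa_subst_mult[of "f x" S' "word_prod f w" g S''] assms(2) by simp
qed

lemma fa_subst_fa_subst:
  assumes "p \<in> FA S" "\<forall>x\<in>S. f x \<in> FA S'" "\<forall>y\<in>S'. g y \<in> FA S''"
  shows "fa_subst g (fa_subst f p) = fa_subst (\<lambda>x. fa_subst g (f x)) p"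
  using assms(1)
proof (induction rule: FA_induct)
  case (step q c w)
  have w: "\<forall>x\<in>set w. f x \<in> FA S'" using step assms(2) by auto
  have "fa_subst f q \<in> FA S'" "word_prod f w \<in> FA S'"
    using step assms(2) w by (auto intro: fa_subst_FA word_prod_FA)
  then show ?case
    using step fa_subst_word_prod[OF w assms(3)]
    by (simp add: fa_subst_add fa_subst_vscal fa_subst_single FA_fsupp)
qed simp

lemma fa_subst_id: "fsupp p \<Longrightarrow> fa_subst (\<lambda>x. single [x]) p = p"
  by (simp add: fa_subst_def word_prod_single lin_ext_single_basis)

lemma fa_subst_ideal:
  assumes "R \<subseteq> FA S" "\<forall>x\<in>S. f x \<in> FA S'" "\<forall>r\<in>R. fa_subst f r \<in> fa_ideal S' R'"
    and "p \<in> fa_ideal S R"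
  shows "fa_subst f p \<in> fa_ideal S' R'"
  using assms(4)
proof (induction rule: fa_ideal.induct)
  case (add p q)
  then show ?case using fa_ideal_FA[OF assms(1) add.hyps(1)] fa_ideal_FA[OF assms(1) add.hyps(2)]
    by (simp add: vadd_eq fa_subst_add FA_fsupp fa_ideal_add)
next
  case (lmult a p)
  then show ?case using fa_ideal_FA[OF assms(1)] assms(2)
    by (simp add: fa_subst_mult[OF _ _ assms(2)] fa_subst_FA fa_ideal.lmult)
next
  case (rmult a p)
  then show ?case using fa_ideal_FA[OF assms(1)] assms(2)
    by (simp add: fa_subst_mult[OF _ _ assms(2)] fa_subst_FA fa_ideal.rmult)
qed (use assms(3) in \<open>simp_all add: vzero_eq\<close>)

lemma fa_subst_congruent_self:
  assumes "R \<subseteq> FA S" "\<forall>x\<in>S. h x \<in> FA S" "\<forall>x\<in>S. h x - single [x] \<in> fa_ideal S R"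
    and "p \<in> FA S"
  shows "fa_subst h p - p \<in> fa_ideal S R"
proof -
  have words: "word_prod h w - single w \<in> fa_ideal S R" if "set w \<subseteq> S" for w
    using that
  proof (induction w)
    case (Cons x w)
    then have "fa_mult (h x) (word_prod h w) - fa_mult (single [x]) (single w) \<in> fa_ideal S R"
      using assms(1-3) by (intro fa_ideal_diff_mult word_prod_FA FA_single) auto
    then show ?case by (simp add: fa_mult_single)
  qed simp
  show ?thesis
    using assms(4)
  proof (induction rule: FA_induct)
    case (step q c w)
    then show ?case
      using fa_ideal_diff_add[OF step.IH fa_ideal_diff_vscal[OF assms(1) words]]
      by (simp add: fa_subst_add fa_subst_vscal fa_subst_single FA_fsupp)
  qed simp
qed

theorem quot_alg_iso_fa_subst:
  assumes R1: "R1 \<subseteq> FA S1" and R2: "R2 \<subseteq> FA S2"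
    and f: "\<forall>x\<in>S1. f x \<in> FA S2" and g: "\<forall>y\<in>S2. g y \<in> FA S1"
    and f_rels: "\<forall>r\<in>R1. fa_subst f r \<in> fa_ideal S2 R2"
    and g_rels: "\<forall>r\<in>R2. fa_subst g r \<in> fa_ideal S1 R1"
    and gf: "\<forall>x\<in>S1. fa_subst g (f x) = single [x]"
    and fg: "\<forall>y\<in>S2. fa_subst f (g y) - single [y] \<in> fa_ideal S2 R2"
  shows "quot_alg_iso S1 (fa_ideal S1 R1) S2 (fa_ideal S2 R2) (fa_subst f)"
  unfolding quot_alg_iso_def
proof (intro conjI ballI allI)
  fix p assume p: "p \<in> FA S1"
  then show "fa_subst f p \<in> FA S2" using f by (rule fa_subst_FA)
  have "fa_subst g (fa_subst f p) = fa_subst (\<lambda>x. single [x]) p"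
    using p f g gf by (simp add: fa_subst_fa_subst fa_subst_cong[of p S1])
  then have gfp: "fa_subst g (fa_subst f p) = p"
    using p by (simp add: fa_subst_id FA_fsupp)
  show "fa_subst f p \<in> fa_ideal S2 R2 \<longleftrightarrow> p \<in> fa_ideal S1 R1"
  proof
    assume "fa_subst f p \<in> fa_ideal S2 R2"
    then show "p \<in> fa_ideal S1 R1" using fa_subst_ideal[OF R2 g g_rels] gfp by metis
  qed (rule fa_subst_ideal[OF R1 f f_rels])
  fix c show "fa_subst f (vscal c p) = vscal c (fa_subst f p)"
    using p by (simp add: fa_subst_vscal FA_fsupp)
  fix q assume q: "q \<in> FA S1"
  show "fa_subst f (vadd p q) = vadd (fa_subst f p) (fa_subst f q)"
    using p q by (simp add: vadd_eq fa_subst_add FA_fsupp)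
  show "fa_subst f (fa_mult p q) = fa_mult (fa_subst f p) (fa_subst f q)"
    using p q f by (rule fa_subst_mult)
next
  show "fa_subst f fa_one = fa_one" by (simp add: fa_one_eq_single fa_subst_single)
next
  fix q assume q: "q \<in> FA S2"
  have fg_FA: "\<forall>y\<in>S2. fa_subst f (g y) \<in> FA S2" using f g by (blast intro: fa_subst_FA)
  have "fa_subst f (fa_subst g q) - q \<in> fa_ideal S2 R2"
    using fa_subst_congruent_self[OF R2 fg_FA fg q] q f g by (simp add: fa_subst_fa_subst)
  then show "\<exists>p\<in>FA S1. vdiff q (fa_subst f p) \<in> fa_ideal S2 R2"
    using q g fa_ideal_diff_sym[OF R2] by (auto simp: vdiff_eq intro!: bexI[of _ "fa_subst g q"] fa_subst_FA)
qed

lemma fm_mult_add_left: "fm_mult (p + q) r = fm_mult p r + fm_mult q r"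
  by (simp add: fm_mult_def fun_eq_iff fun_apply_simps distrib_right split: mtree.split)
lemma fm_mult_add_right: "fm_mult r (p + q) = fm_mult r p + fm_mult r q"
  by (simp add: fm_mult_def fun_eq_iff fun_apply_simps distrib_left split: mtree.split)
lemma fm_mult_diff_left: "fm_mult (p - q) r = fm_mult p r - fm_mult q r"
  by (simp add: fm_mult_def fun_eq_iff fun_apply_simps left_diff_distrib split: mtree.split)
lemma fm_mult_diff_right: "fm_mult r (p - q) = fm_mult r p - fm_mult r q"
  by (simp add: fm_mult_def fun_eq_iff fun_apply_simps right_diff_distrib split: mtree.split)
lemma fm_mult_vscal_left: "fm_mult (vscal c p) r = vscal c (fm_mult p r)"
  by (simp add: fm_mult_def fun_eq_iff vscal_def split: mtree.split)
lemma fm_mult_vscal_right: "fm_mult r (vscal c p) = vscal c (fm_mult r p)"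
  by (simp add: fm_mult_def fun_eq_iff vscal_def split: mtree.split)
lemma fm_mult_zero_left[simp]: "fm_mult 0 r = 0"
  by (simp add: fm_mult_def fun_eq_iff fun_apply_simps split: mtree.split)
lemma fm_mult_zero_right[simp]: "fm_mult r 0 = 0"
  by (simp add: fm_mult_def fun_eq_iff fun_apply_simps split: mtree.split)

lemmas fm_mult_linear = fm_mult_add_left fm_mult_add_right fm_mult_diff_left fm_mult_diff_right
  fm_mult_vscal_left fm_mult_vscal_right

lemma fm_mult_single: "fm_mult (single s) (single t) = single (Node s t)"
  by (simp add: fm_mult_def fun_eq_iff single_def split: mtree.split)

lemma fm_mult_nonzero:
  assumes "fm_mult p q t \<noteq> 0"
  obtains a b where "t = Node a b" "p a \<noteq> 0" "q b \<noteq> 0"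
  using assms by (cases t) (auto simp: fm_mult_def)

lemma fsupp_fm_mult[simp]: "fsupp p \<Longrightarrow> fsupp q \<Longrightarrow> fsupp (fm_mult p q)"
  unfolding fsupp_def
  by (rule finite_subset[of _ "(\<lambda>(a, b). Node a b) ` ({x. p x \<noteq> 0} \<times> {x. q x \<noteq> 0})"])
     (auto elim!: fm_mult_nonzero)

lemma fm_jacobi_eq:
  "fm_jacobi a b c = fm_mult (fm_mult a b) c + fm_mult (fm_mult b c) a + fm_mult (fm_mult c a) b"
  by (simp add: fm_jacobi_def vadd_eq)

lemma FM_fsupp: "p \<in> FM S \<Longrightarrow> fsupp p" by (simp add: FM_def)
lemma FM_support: "p \<in> FM S \<Longrightarrow> p t \<noteq> 0 \<Longrightarrow> set_mtree t \<subseteq> S" by (simp add: FM_def)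
lemma FM_zero[simp]: "0 \<in> FM S" by (simp add: FM_def fun_apply_simps)
lemma FM_single: "set_mtree t \<subseteq> S \<Longrightarrow> single t \<in> FM S" by (simp add: FM_def) (simp add: single_def)
lemma FM_add[simp]: "p \<in> FM S \<Longrightarrow> q \<in> FM S \<Longrightarrow> p + q \<in> FM S"
  unfolding FM_def by (simp add: fun_apply_simps) (metis add.right_neutral add_0)
lemma FM_diff[simp]: "p \<in> FM S \<Longrightarrow> q \<in> FM S \<Longrightarrow> p - q \<in> FM S"
  unfolding FM_def by (simp add: fun_apply_simps) (metis diff_0_right diff_self)
lemma FM_vscal[simp]: "p \<in> FM S \<Longrightarrow> vscal c p \<in> FM S"
  unfolding FM_def by (simp add: vscal_def) (auto simp: fsupp_vscal[unfolded vscal_def])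
lemma FM_fm_mult[simp]: "p \<in> FM S \<Longrightarrow> q \<in> FM S \<Longrightarrow> fm_mult p q \<in> FM S"
  by (auto simp: FM_def elim!: fm_mult_nonzero) blast+

lemma FM_induct[consumes 1, case_names zero step]:
  assumes "p \<in> FM S" "P 0"
    and "\<And>q c t. q \<in> FM S \<Longrightarrow> set_mtree t \<subseteq> S \<Longrightarrow> P q \<Longrightarrow> P (q + vscal c (single t))"
  shows "P p"
proof -
  have "fsupp p" "\<forall>t. p t \<noteq> 0 \<longrightarrow> set_mtree t \<subseteq> S" using assms(1) by (simp_all add: FM_def)
  then show ?thesis
  proof (induction rule: fsupp_support_induct)
    case (step q c t) then show ?case by (intro assms(3)) (simp_all add: FM_def)
  qed (fact assms(2))
qed

lemma lin_ext_FM: "fsupp p \<Longrightarrow> \<forall>t. p t \<noteq> 0 \<longrightarrow> g t \<in> FM S' \<Longrightarrow> lin_ext g p \<in> FM S'"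
  by (induction rule: fsupp_support_induct) (simp_all add: lin_ext_step)

lemma lie_ideal_FM: "p \<in> lie_ideal S \<Longrightarrow> p \<in> FM S"
  by (induction rule: lie_ideal.induct) (auto simp: vzero_eq vadd_eq fm_jacobi_eq)

lemma lie_ideal_zero[simp]: "0 \<in> lie_ideal S"
  using lie_ideal.zero by (simp add: vzero_eq)
lemma lie_ideal_add: "p \<in> lie_ideal S \<Longrightarrow> q \<in> lie_ideal S \<Longrightarrow> p + q \<in> lie_ideal S"
  using lie_ideal.add by (simp add: vadd_eq)
lemma lie_ideal_diff: "p \<in> lie_ideal S \<Longrightarrow> q \<in> lie_ideal S \<Longrightarrow> p - q \<in> lie_ideal S"
  using lie_ideal_add[of p S "vscal (-1) q"] lie_ideal.scal[of q S "-1"] by (simp add: vscal_minus_one)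

section \<open>Bracket trees as iterated commutators\<close>

primrec comm_of_tree :: "'x mtree \<Rightarrow> 'x list \<Rightarrow> complex" where
  "comm_of_tree (Leaf k) = single [k]"
| "comm_of_tree (Node a b) = fa_comm (comm_of_tree a) (comm_of_tree b)"

abbreviation comm_of :: "('x mtree \<Rightarrow> complex) \<Rightarrow> 'x list \<Rightarrow> complex" where
  "comm_of \<equiv> lin_ext comm_of_tree"

lemma comm_of_tree_FA: "set_mtree t \<subseteq> S \<Longrightarrow> comm_of_tree t \<in> FA S"
  by (induction t) (auto intro: FA_single)

lemma comm_of_FA: "p \<in> FM S \<Longrightarrow> comm_of p \<in> FA S"
  by (rule lin_ext_FA) (auto simp: FM_fsupp dest: FM_support intro: comm_of_tree_FA)

lemma fsupp_comm_of_tree: "fsupp (comm_of_tree t)"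
  using comm_of_tree_FA[of t "set_mtree t"] FA_fsupp by blast

lemma fsupp_comm_of: "fsupp p \<Longrightarrow> fsupp (comm_of p)"
  using lin_ext_FA[of p comm_of_tree UNIV] by (auto intro: comm_of_tree_FA FA_fsupp)

lemma comm_of_fm_mult:
  assumes "fsupp p" "fsupp q"
  shows "comm_of (fm_mult p q) = fa_comm (comm_of p) (comm_of q)"
proof -
  have monomials: "comm_of (fm_mult (single s) q) = fa_comm (comm_of_tree s) (comm_of q)" for s
    using assms(2)
  proof (induction rule: fsupp_induct)
    case (step q c t)
    have "fm_mult (single s) (q + vscal c (single t)) = fm_mult (single s) q + vscal c (single (Node s t))"
      by (simp add: fm_mult_linear fm_mult_single)
    then show ?case using step by (simp add: lin_ext_add lin_ext_vscal lin_ext_step fa_comm_linear)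
  qed simp
  show ?thesis
    using assms(1)
  proof (induction rule: fsupp_induct)
    case (step p' c t)
    have "fm_mult (p' + vscal c (single t)) q = fm_mult p' q + vscal c (fm_mult (single t) q)"
      by (simp add: fm_mult_linear)
    then show ?case using step assms(2)
      by (simp add: lin_ext_add lin_ext_vscal lin_ext_step fa_comm_linear monomials)
  qed simp
qed

lemma comm_of_lie_ideal: "p \<in> lie_ideal S \<Longrightarrow> comm_of p = 0"
proof (induction rule: lie_ideal.induct)
  case (add p q)
  then show ?case using lie_ideal_FM[OF add.hyps(1)] lie_ideal_FM[OF add.hyps(2)]
    by (simp add: vadd_eq lin_ext_add FM_fsupp)
next
  case (scal p c)
  then show ?case using lie_ideal_FM[OF scal.hyps(1)] by (simp add: lin_ext_vscal FM_fsupp)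
next
  case (jac a b c)
  then have "fsupp a" "fsupp b" "fsupp c" by (simp_all add: FM_fsupp)
  then show ?case
    using fa_comm_jacobi[of "comm_of a" "comm_of b" "comm_of c"]
    by (simp add: fm_jacobi_eq lin_ext_add comm_of_fm_mult fsupp_comm_of)
next
  case (lmult a p)
  then show ?case using lie_ideal_FM[OF lmult.hyps(2)] by (simp add: comm_of_fm_mult FM_fsupp)
next
  case (rmult a p)
  then show ?case using lie_ideal_FM[OF rmult.hyps(2)] by (simp add: comm_of_fm_mult FM_fsupp)
qed (simp_all add: vzero_eq comm_of_fm_mult FM_fsupp)

lemma comm_of_cong: "p \<in> FM S \<Longrightarrow> q \<in> FM S \<Longrightarrow> p - q \<in> lie_ideal S \<Longrightarrow> comm_of p = comm_of q"
  using comm_of_lie_ideal[of "p - q" S] by (simp add: lin_ext_diff FM_fsupp)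

section \<open>The derivation \<open>\<delta>\<close>\<close>

lemma fm_der_eq_lin_ext: "fm_der = lin_ext dtree"
  by (simp add: fun_eq_iff fm_der_def lin_ext_def)

lemma fsupp_dtree: "fsupp (dtree t)"
  by (induction t) (auto simp: fm_single_eq_single vadd_eq vzero_eq)

lemma dtree_FM: "set_mtree t \<subseteq> S3 \<Longrightarrow> dtree t \<in> FM S3"
  by (induction t) (auto simp: fm_single_eq_single vadd_eq vzero_eq S3_def intro!: FM_add FM_fm_mult FM_single)

lemma fm_der_add: "fsupp p \<Longrightarrow> fsupp q \<Longrightarrow> fm_der (p + q) = fm_der p + fm_der q"
  by (simp add: fm_der_eq_lin_ext lin_ext_add)
lemma fm_der_diff: "fsupp p \<Longrightarrow> fsupp q \<Longrightarrow> fm_der (p - q) = fm_der p - fm_der q"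
  by (simp add: fm_der_eq_lin_ext lin_ext_diff)
lemma fm_der_vscal: "fsupp p \<Longrightarrow> fm_der (vscal c p) = vscal c (fm_der p)"
  by (simp add: fm_der_eq_lin_ext lin_ext_vscal)
lemma fm_der_zero[simp]: "fm_der 0 = 0"
  by (simp add: fm_der_eq_lin_ext)
lemma fm_der_single[simp]: "fm_der (single t) = dtree t"
  by (simp add: fm_der_eq_lin_ext)

lemma fsupp_fm_der: "fsupp p \<Longrightarrow> fsupp (fm_der p)"
  unfolding fm_der_eq_lin_ext using lin_ext_FM[of p dtree UNIV]
  by (auto simp: FM_def fsupp_dtree)

lemma fm_der_FM: "p \<in> FM S3 \<Longrightarrow> fm_der p \<in> FM S3"
  unfolding fm_der_eq_lin_ext
  by (rule lin_ext_FM) (auto simp: FM_fsupp dest: FM_support intro: dtree_FM)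

lemma fm_der_fm_mult:
  assumes "fsupp p" "fsupp q"
  shows "fm_der (fm_mult p q) = fm_mult (fm_der p) q + fm_mult p (fm_der q)"
proof -
  have monomials: "fm_der (fm_mult (single s) q) = fm_mult (dtree s) q + fm_mult (single s) (fm_der q)"
    for s using assms(2)
  proof (induction rule: fsupp_induct)
    case (step q c t)
    have "fm_mult (single s) (q + vscal c (single t)) = fm_mult (single s) q + vscal c (single (Node s t))"
      by (simp add: fm_mult_linear fm_mult_single)
    then show ?case using step
      by (simp add: fm_mult_linear fm_der_add fm_der_vscal fm_single_eq_single vadd_eq vscal_add add_ac)
  qed simp
  show ?thesis
    using assms(1)
  proof (induction rule: fsupp_induct)
    case (step p' c t)
    have "fm_mult (p' + vscal c (single t)) q = fm_mult p' q + vscal c (fm_mult (single t) q)"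
      by (simp add: fm_mult_linear)
    then show ?case using step assms(2)
      by (simp add: monomials fm_mult_linear fm_der_add fm_der_vscal vscal_add add_ac)
  qed simp
qed

text \<open>For the antisymmetry generators polarise: \<open>\<delta>(aa) = (a + \<delta>a)(a + \<delta>a) - aa - \<delta>a\<delta>a\<close>.\<close>
lemma fm_der_lie_ideal: "p \<in> lie_ideal S3 \<Longrightarrow> fm_der p \<in> lie_ideal S3"
proof (induction rule: lie_ideal.induct)
  case (add p q)
  then show ?case using lie_ideal_FM[OF add.hyps(1)] lie_ideal_FM[OF add.hyps(2)]
    by (simp add: vadd_eq fm_der_add FM_fsupp lie_ideal_add)
next
  case (scal p c)
  then show ?case using lie_ideal_FM[OF scal.hyps(1)] by (simp add: fm_der_vscal FM_fsupp lie_ideal.scal)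
next
  case (alt a)
  have "fm_der (fm_mult a a) =
      fm_mult (a + fm_der a) (a + fm_der a) - fm_mult a a - fm_mult (fm_der a) (fm_der a)"
    using alt by (simp add: fm_der_fm_mult fm_mult_linear FM_fsupp)
  also have "\<dots> \<in> lie_ideal S3"
    using alt fm_der_FM by (intro lie_ideal_diff lie_ideal.alt) auto
  finally show ?case .
next
  case (jac a b c)
  then have "fsupp a" "fsupp b" "fsupp c" "fsupp (fm_der a)" "fsupp (fm_der b)" "fsupp (fm_der c)"
    by (simp_all add: FM_fsupp fsupp_fm_der)
  then have "fm_der (fm_jacobi a b c) =
      fm_jacobi (fm_der a) b c + fm_jacobi a (fm_der b) c + fm_jacobi a b (fm_der c)"
    by (simp add: fm_jacobi_eq fm_der_add fm_der_fm_mult fm_mult_linear add_ac)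
  also have "\<dots> \<in> lie_ideal S3"
    using jac by (simp add: vadd_eq[symmetric] lie_ideal.add lie_ideal.jac fm_der_FM)
  finally show ?case .
next
  case (lmult a p)
  then show ?case using lie_ideal_FM[OF lmult.hyps(2)]
    by (simp add: fm_der_fm_mult FM_fsupp lie_ideal_add lie_ideal.lmult lie_ideal.rmult fm_der_FM)
next
  case (rmult a p)
  then show ?case using lie_ideal_FM[OF rmult.hyps(2)]
    by (simp add: fm_der_fm_mult FM_fsupp lie_ideal_add lie_ideal.lmult lie_ideal.rmult fm_der_FM)
qed (simp add: vzero_eq)

lemma fl_rep_class:
  assumes "p \<in> FM S"
  shows "fl_rep (fl_class S p) \<in> FM S" "fl_rep (fl_class S p) - p \<in> lie_ideal S"
proof -
  have "p \<in> fl_class S p" using assms by (simp add: fl_class_def vdiff_eq)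
  then have "fl_rep (fl_class S p) \<in> fl_class S p" unfolding fl_rep_def by (rule someI[where P="\<lambda>x. x \<in> fl_class S p"])
  then show "fl_rep (fl_class S p) \<in> FM S" "fl_rep (fl_class S p) - p \<in> lie_ideal S"
    by (simp_all add: fl_class_def vdiff_eq)
qed

lemma fl_class_eq:
  assumes "p - q \<in> lie_ideal S"
  shows "fl_class S p = fl_class S q"
proof -
  have "r - p \<in> lie_ideal S \<longleftrightarrow> r - q \<in> lie_ideal S" for r
  proof
    assume "r - p \<in> lie_ideal S"
    from lie_ideal_add[OF this assms] show "r - q \<in> lie_ideal S" by simp
  next
    assume "r - q \<in> lie_ideal S"
    from lie_ideal_diff[OF this assms] show "r - p \<in> lie_ideal S" by simp
  qed
  then show ?thesis by (simp add: fl_class_def vdiff_eq)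
qed

lemma fl_add_class:
  "p \<in> FM S \<Longrightarrow> q \<in> FM S \<Longrightarrow> fl_add S (fl_class S p) (fl_class S q) = fl_class S (p + q)"
  unfolding fl_add_def vadd_eq
  using lie_ideal_add[OF fl_rep_class(2)[of p S] fl_rep_class(2)[of q S]]
  by (intro fl_class_eq) (simp add: algebra_simps)

lemma fl_scal_class: "p \<in> FM S \<Longrightarrow> fl_scal S c (fl_class S p) = fl_class S (vscal c p)"
  unfolding fl_scal_def
  using lie_ideal.scal[OF fl_rep_class(2)[of p S], of c]
  by (intro fl_class_eq) (simp add: vscal_diff)

lemma fl_bracket_class:
  assumes "p \<in> FM S" "q \<in> FM S"
  shows "fl_bracket S (fl_class S p) (fl_class S q) = fl_class S (fm_mult p q)"
proof -
  let ?rp = "fl_rep (fl_class S p)" and ?rq = "fl_rep (fl_class S q)"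
  have "fm_mult ?rp ?rq - fm_mult p q = fm_mult (?rp - p) ?rq + fm_mult p (?rq - q)"
    by (simp add: fm_mult_linear)
  also have "\<dots> \<in> lie_ideal S"
    using fl_rep_class[OF assms(1)] fl_rep_class[OF assms(2)] assms
    by (intro lie_ideal_add lie_ideal.rmult lie_ideal.lmult)
  finally show ?thesis unfolding fl_bracket_def by (rule fl_class_eq)
qed

lemma fl_delta_class: "p \<in> FM S3 \<Longrightarrow> fl_delta (fl_class S3 p) = fl_class S3 (fm_der p)"
  unfolding fl_delta_def
  using fl_rep_class[of p S3] fm_der_lie_ideal[of "fl_rep (fl_class S3 p) - p"]
  by (intro fl_class_eq) (simp add: fm_der_diff FM_fsupp)

section \<open>The semidirect product \<open>\<complex>\<delta> \<ltimes> L\<close>\<close>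

abbreviation g_elt :: "complex \<Rightarrow> (nat mtree \<Rightarrow> complex) \<Rightarrow> gelt" where
  "g_elt c p \<equiv> (c, fl_class S3 p)"

lemma gcar_iff: "u \<in> gcar \<longleftrightarrow> (\<exists>c p. p \<in> FM S3 \<and> u = g_elt c p)"
  by (cases u) (auto simp: gcar_def FL_def)

lemma g_elt_gcar[simp]: "p \<in> FM S3 \<Longrightarrow> g_elt c p \<in> gcar"
  by (auto simp: gcar_iff)

lemma g_add_g_elt: "p \<in> FM S3 \<Longrightarrow> q \<in> FM S3 \<Longrightarrow> g_add (g_elt c p) (g_elt d q) = g_elt (c + d) (p + q)"
  by (simp add: g_add_def fl_add_class)

lemma g_scal_g_elt: "p \<in> FM S3 \<Longrightarrow> g_scal a (g_elt c p) = g_elt (a * c) (vscal a p)"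
  by (simp add: g_scal_def fl_scal_class)

lemma g_bracket_g_elt:
  "p \<in> FM S3 \<Longrightarrow> q \<in> FM S3 \<Longrightarrow>
   g_bracket (g_elt c p) (g_elt d q) = g_elt 0 (vscal c (fm_der q) + vscal (-d) (fm_der p) + fm_mult p q)"
  by (simp add: g_bracket_def fl_delta_class fl_scal_class fl_add_class fl_bracket_class fm_der_FM)

lemma g_delta_eq: "g_delta = g_elt 1 0"
  by (simp add: g_delta_def fl_zero_def vzero_eq)

lemma g_gen_eq: "g_gen k = g_elt 0 (single (Leaf k))"
  by (simp add: g_gen_def fm_single_eq_single)

lemma g_add_gcar: "u \<in> gcar \<Longrightarrow> v \<in> gcar \<Longrightarrow> g_add u v \<in> gcar"
  by (auto simp: gcar_iff[of u] gcar_iff[of v] g_add_g_elt)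

lemma g_scal_gcar: "u \<in> gcar \<Longrightarrow> g_scal c u \<in> gcar"
  by (auto simp: gcar_iff[of u] g_scal_g_elt)

lemma g_bracket_gcar: "u \<in> gcar \<Longrightarrow> v \<in> gcar \<Longrightarrow> g_bracket u v \<in> gcar"
  by (auto simp: gcar_iff[of u] gcar_iff[of v] g_bracket_g_elt fm_der_FM)

lemma Aplus_rels_FA: "Aplus_rels \<subseteq> FA {0,1,2,3}"
  unfolding Aplus_rels_def cyc_def fa_gen_eq_single vdiff_eq by (auto intro!: FA_diff FA_fa_comm FA_single)

lemma Aplus_rel_in_ideal:
  "(k, l, m) \<in> cyc \<Longrightarrow> fa_comm (single [0]) (single [k]) - fa_comm (single [l]) (single [m]) \<in> Aplus_ideal"
  unfolding Aplus_ideal_def Aplus_rels_def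
  by (rule fa_ideal.gen) (auto simp: vdiff_eq fa_gen_eq_single)

lemmas Aplus_ideal_add = fa_ideal_add[of _ "{0,1,2,3}" Aplus_rels, folded Aplus_ideal_def]
lemmas Aplus_ideal_diff = fa_ideal_diff[OF Aplus_rels_FA, folded Aplus_ideal_def]
lemmas Aplus_ideal_vscal = fa_ideal_vscal[OF Aplus_rels_FA, folded Aplus_ideal_def]
lemmas Aplus_ideal_comm_left = fa_ideal_comm_left[OF Aplus_rels_FA, folded Aplus_ideal_def]
lemmas Aplus_ideal_comm_right = fa_ideal_comm_right[OF Aplus_rels_FA, folded Aplus_ideal_def]

lemma comm_of_FA_Aplus: "p \<in> FM S3 \<Longrightarrow> comm_of p \<in> FA {0,1,2,3}"
  using comm_of_FA FA_mono by (fastforce simp: S3_def)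

lemma comm_of_tree_FA_Aplus: "set_mtree t \<subseteq> S3 \<Longrightarrow> comm_of_tree t \<in> FA {0,1,2,3}"
  using comm_of_tree_FA FA_mono by (fastforce simp: S3_def)

lemma nabla0_comm_of_tree:
  "set_mtree t \<subseteq> S3 \<Longrightarrow> fa_comm (single [0]) (comm_of_tree t) - comm_of (dtree t) \<in> Aplus_ideal"
proof (induction t)
  case (Leaf k)
  then have "k = 1 \<or> k = 2 \<or> k = 3" by (simp add: S3_def)
  then show ?case
    using Aplus_rel_in_ideal[of 1 2 3] Aplus_rel_in_ideal[of 2 3 1] Aplus_rel_in_ideal[of 3 1 2]
    by (auto simp: cyc_def fm_single_eq_single)
next
  case (Node a b)
  then have a: "set_mtree a \<subseteq> S3" and b: "set_mtree b \<subseteq> S3" by auto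
  have "comm_of (dtree (Node a b)) =
      fa_comm (comm_of (dtree a)) (comm_of_tree b) + fa_comm (comm_of_tree a) (comm_of (dtree b))"
    by (simp add: vadd_eq fm_single_eq_single lin_ext_add comm_of_fm_mult fsupp_dtree)
  moreover have "fa_comm (single [0]) (comm_of_tree (Node a b)) =
      fa_comm (fa_comm (single [0]) (comm_of_tree a)) (comm_of_tree b) +
      fa_comm (comm_of_tree a) (fa_comm (single [0]) (comm_of_tree b))"
    using fa_comm_leibniz[of "single [0]" "comm_of_tree a" "comm_of_tree b"] by (simp add: fsupp_comm_of_tree)
  ultimately have "fa_comm (single [0]) (comm_of_tree (Node a b)) - comm_of (dtree (Node a b)) =
      fa_comm (fa_comm (single [0]) (comm_of_tree a) - comm_of (dtree a)) (comm_of_tree b) +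
      fa_comm (comm_of_tree a) (fa_comm (single [0]) (comm_of_tree b) - comm_of (dtree b))"
    by (simp add: fa_comm_linear)
  also have "\<dots> \<in> Aplus_ideal"
    using Node.IH a b
    by (intro Aplus_ideal_add Aplus_ideal_comm_left Aplus_ideal_comm_right comm_of_tree_FA_Aplus)
  finally show ?case .
qed

lemma nabla0_comm_of:
  "q \<in> FM S3 \<Longrightarrow> fa_comm (single [0]) (comm_of q) - comm_of (fm_der q) \<in> Aplus_ideal"
proof (induction rule: FM_induct)
  case (step q c t)
  then have "fa_comm (single [0]) (comm_of (q + vscal c (single t))) - comm_of (fm_der (q + vscal c (single t)))
     = (fa_comm (single [0]) (comm_of q) - comm_of (fm_der q))
       + vscal c (fa_comm (single [0]) (comm_of_tree t) - comm_of (dtree t))"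
    by (simp add: lin_ext_step fm_der_add fm_der_vscal fa_comm_linear lin_ext_add lin_ext_vscal
        fsupp_fm_der fsupp_dtree vscal_diff FM_fsupp)
  also have "\<dots> \<in> Aplus_ideal"
    using step nabla0_comm_of_tree by (intro Aplus_ideal_add Aplus_ideal_vscal) auto
  finally show ?case .
qed (simp add: Aplus_ideal_def)

lemma U_rels_FA: "U_rels \<subseteq> FA gcar"
  unfolding U_rels_def fa_gen_eq_single vdiff_eq vadd_eq
  by (auto intro!: FA_diff FA_add FA_vscal FA_fa_comm FA_single g_add_gcar g_scal_gcar g_bracket_gcar)

lemma U_rel_in_ideal: "vdiff p q \<in> U_rels \<Longrightarrow> p - q \<in> U_ideal"
  unfolding U_ideal_def vdiff_eq[symmetric] by (rule fa_ideal.gen)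

lemma U_add_rel: "u \<in> gcar \<Longrightarrow> v \<in> gcar \<Longrightarrow> single [g_add u v] - (single [u] + single [v]) \<in> U_ideal"
  by (rule U_rel_in_ideal) (unfold U_rels_def fa_gen_eq_single vadd_eq, blast)

lemma U_scal_rel: "u \<in> gcar \<Longrightarrow> single [g_scal c u] - vscal c (single [u]) \<in> U_ideal"
  by (rule U_rel_in_ideal) (unfold U_rels_def fa_gen_eq_single, blast)

lemma U_bracket_rel:
  "u \<in> gcar \<Longrightarrow> v \<in> gcar \<Longrightarrow> fa_comm (single [u]) (single [v]) - single [g_bracket u v] \<in> U_ideal"
  by (rule U_rel_in_ideal) (unfold U_rels_def fa_gen_eq_single, blast)

lemmas U_ideal_diff = fa_ideal_diff[OF U_rels_FA, folded U_ideal_def]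
lemmas U_ideal_diff_trans = fa_ideal_diff_trans[of _ _ gcar U_rels, folded U_ideal_def]
lemmas U_ideal_diff_sym = fa_ideal_diff_sym[OF U_rels_FA, folded U_ideal_def]
lemmas U_ideal_diff_add = fa_ideal_diff_add[of _ _ gcar U_rels, folded U_ideal_def]
lemmas U_ideal_diff_vscal = fa_ideal_diff_vscal[OF U_rels_FA, folded U_ideal_def]
lemmas U_ideal_diff_comm = fa_ideal_diff_comm[OF U_rels_FA, folded U_ideal_def]

section \<open>The mutually inverse substitutions\<close>

definition g_letter :: "nat \<Rightarrow> gelt" where
  "g_letter x = (if x = 0 then g_delta else g_gen x)"

definition phi_letter :: "nat \<Rightarrow> gelt list \<Rightarrow> complex" where
  "phi_letter x = single [g_letter x]"

definition psi_letter :: "gelt \<Rightarrow> nat list \<Rightarrow> complex" where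
  "psi_letter u = vscal (fst u) (single [0]) + comm_of (fl_rep (snd u))"

lemma g_letter_gcar:
  assumes "x \<in> {0,1,2,3}"
  shows "g_letter x \<in> gcar"
proof (cases "x = 0")
  case False
  with assms have "x \<in> S3" by (auto simp: S3_def)
  with False show ?thesis by (simp add: g_letter_def g_gen_eq FM_single)
qed (simp add: g_letter_def g_delta_eq)

lemma phi_letter_FA: "\<forall>x\<in>{0,1,2,3}. phi_letter x \<in> FA gcar"
proof
  fix x :: nat assume "x \<in> {0,1,2,3}"
  then have "set [g_letter x] \<subseteq> gcar" using g_letter_gcar by simp
  then show "phi_letter x \<in> FA gcar" unfolding phi_letter_def by (rule FA_single)
qed

lemma psi_letter_g_elt: "p \<in> FM S3 \<Longrightarrow> psi_letter (g_elt c p) = vscal c (single [0]) + comm_of p"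
  using fl_rep_class[of p S3] comm_of_cong[of "fl_rep (fl_class S3 p)" S3 p] by (simp add: psi_letter_def)

lemma psi_letter_FA: "\<forall>u\<in>gcar. psi_letter u \<in> FA {0,1,2,3}"
proof
  fix u assume "u \<in> gcar"
  then obtain c p where "p \<in> FM S3" "u = g_elt c p" by (auto simp: gcar_iff)
  then show "psi_letter u \<in> FA {0,1,2,3}"
    using comm_of_FA_Aplus[of p] by (simp only: psi_letter_g_elt) (intro FA_add FA_vscal FA_single; simp)
qed

lemma fsupp_psi_letter: "u \<in> gcar \<Longrightarrow> fsupp (psi_letter u)"
  using psi_letter_FA FA_fsupp by blast

lemma psi_phi_letter: "\<forall>x\<in>{0,1,2,3}. fa_subst psi_letter (phi_letter x) = single [x]"
proof
  fix x :: nat assume x: "x \<in> {0,1,2,3}"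
  have "fa_subst psi_letter (phi_letter x) = psi_letter (g_letter x)"
    using x g_letter_gcar by (simp add: phi_letter_def fa_subst_gen fsupp_psi_letter)
  also have "\<dots> = single [x]"
  proof (cases "x = 0")
    case False
    with x have "x \<in> S3" by (auto simp: S3_def)
    with False show ?thesis by (simp add: g_letter_def g_gen_eq psi_letter_g_elt FM_single)
  qed (simp add: g_letter_def g_delta_eq psi_letter_g_elt)
  finally show "fa_subst psi_letter (phi_letter x) = single [x]" .
qed

lemma phi_comm_of_tree:
  "set_mtree t \<subseteq> S3 \<Longrightarrow> fa_subst phi_letter (comm_of_tree t) - single [g_elt 0 (single t)] \<in> U_ideal"
proof (induction t)
  case (Leaf k)
  then have "k \<noteq> 0" by (auto simp: S3_def)
  then have "fa_subst phi_letter (comm_of_tree (Leaf k)) = single [g_elt 0 (single (Leaf k))]"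
    by (simp add: fa_subst_gen phi_letter_def g_letter_def g_gen_eq)
  then show ?case by (simp add: U_ideal_def)
next
  case (Node a b)
  then have a: "set_mtree a \<subseteq> S3" and b: "set_mtree b \<subseteq> S3" by auto
  then have "single a \<in> FM S3" "single b \<in> FM S3" by (simp_all add: FM_single)
  have image: "fa_subst phi_letter (comm_of_tree (Node a b)) =
      fa_comm (fa_subst phi_letter (comm_of_tree a)) (fa_subst phi_letter (comm_of_tree b))"
    using fa_subst_comm[OF comm_of_tree_FA_Aplus[OF a] comm_of_tree_FA_Aplus[OF b] phi_letter_FA] by simp
  have "fa_comm (fa_subst phi_letter (comm_of_tree a)) (fa_subst phi_letter (comm_of_tree b))
      - fa_comm (single [g_elt 0 (single a)]) (single [g_elt 0 (single b)]) \<in> U_ideal"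
    using Node.IH a b \<open>single a \<in> FM S3\<close> \<open>single b \<in> FM S3\<close>
    by (intro U_ideal_diff_comm fa_subst_FA[OF comm_of_tree_FA_Aplus] phi_letter_FA FA_single) auto
  moreover have "fa_comm (single [g_elt 0 (single a)]) (single [g_elt 0 (single b)])
      - single [g_elt 0 (single (Node a b))] \<in> U_ideal"
    using U_bracket_rel[of "g_elt 0 (single a)" "g_elt 0 (single b)"]
      \<open>single a \<in> FM S3\<close> \<open>single b \<in> FM S3\<close>
    by (simp add: g_bracket_g_elt fm_mult_single)
  ultimately show ?case unfolding image by (rule U_ideal_diff_trans)
qed

lemma phi_comm_of: "p \<in> FM S3 \<Longrightarrow> fa_subst phi_letter (comm_of p) - single [g_elt 0 p] \<in> U_ideal"
proof (induction rule: FM_induct)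
  case zero
  have "single [g_scal 0 (g_elt 0 0)] - vscal 0 (single [g_elt 0 0]) \<in> U_ideal"
    by (rule U_scal_rel) simp
  then show ?case using U_ideal_diff_sym[of "single [g_elt 0 0]" 0] by (simp add: g_scal_g_elt)
next
  case (step q c t)
  have t: "single t \<in> FM S3" using step by (simp add: FM_single)
  have image: "fa_subst phi_letter (comm_of (q + vscal c (single t))) =
      fa_subst phi_letter (comm_of q) + vscal c (fa_subst phi_letter (comm_of_tree t))"
    using step by (simp add: lin_ext_step fa_subst_add fa_subst_vscal fsupp_comm_of fsupp_comm_of_tree FM_fsupp)
  have IH: "fa_subst phi_letter (comm_of q) + vscal c (fa_subst phi_letter (comm_of_tree t))
      - (single [g_elt 0 q] + vscal c (single [g_elt 0 (single t)])) \<in> U_ideal"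
    using step phi_comm_of_tree by (intro U_ideal_diff_add U_ideal_diff_vscal) auto
  have scal_rel: "single [g_elt 0 q] + vscal c (single [g_elt 0 (single t)])
      - (single [g_elt 0 q] + single [g_scal c (g_elt 0 (single t))]) \<in> U_ideal"
    using t by (intro U_ideal_diff_add[OF _ U_ideal_diff_sym[OF U_scal_rel]]) (simp_all add: U_ideal_def)
  have "single [g_elt 0 q] + single [g_scal c (g_elt 0 (single t))]
      - single [g_add (g_elt 0 q) (g_scal c (g_elt 0 (single t)))] \<in> U_ideal"
    using step t by (intro U_ideal_diff_sym[OF U_add_rel] g_scal_gcar) auto
  moreover have "g_add (g_elt 0 q) (g_scal c (g_elt 0 (single t))) = g_elt 0 (q + vscal c (single t))"
    using step t by (simp add: g_scal_g_elt g_add_g_elt)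
  ultimately have add_rel: "single [g_elt 0 q] + single [g_scal c (g_elt 0 (single t))]
      - single [g_elt 0 (q + vscal c (single t))] \<in> U_ideal"
    by simp
  show ?case
    unfolding image using U_ideal_diff_trans[OF U_ideal_diff_trans[OF IH scal_rel] add_rel] .
qed

lemma phi_psi_letter: "\<forall>u\<in>gcar. fa_subst phi_letter (psi_letter u) - single [u] \<in> U_ideal"
proof
  fix u assume "u \<in> gcar"
  then obtain c p where p: "p \<in> FM S3" and u: "u = g_add (g_scal c g_delta) (g_elt 0 p)"
    by (auto simp: gcar_iff g_delta_eq g_scal_g_elt g_add_g_elt)
  have delta: "g_delta \<in> gcar" by (simp add: g_delta_eq)
  have "fa_subst phi_letter (psi_letter u) = vscal c (single [g_delta]) + fa_subst phi_letter (comm_of p)"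
    using p
    by (simp add: u g_delta_eq g_scal_g_elt g_add_g_elt psi_letter_g_elt fa_subst_add fa_subst_vscal
        fa_subst_gen fsupp_comm_of FM_fsupp phi_letter_def g_letter_def)
  moreover have "\<dots> - (single [g_scal c g_delta] + single [g_elt 0 p]) \<in> U_ideal"
    by (rule U_ideal_diff_add[OF U_ideal_diff_sym[OF U_scal_rel[OF delta]] phi_comm_of[OF p]])
  moreover have "single [g_scal c g_delta] + single [g_elt 0 p] - single [u] \<in> U_ideal"
    unfolding u using p delta by (intro U_ideal_diff_sym[OF U_add_rel] g_scal_gcar) auto
  ultimately show "fa_subst phi_letter (psi_letter u) - single [u] \<in> U_ideal"
    by (metis U_ideal_diff_trans)
qed

lemma phi_Aplus_rels: "\<forall>r\<in>Aplus_rels. fa_subst phi_letter r \<in> U_ideal"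
proof
  fix r assume "r \<in> Aplus_rels"
  then obtain k l m where r: "r = fa_comm (single [0]) (single [k]) - fa_comm (single [l]) (single [m])"
    and klm: "(k, l, m) \<in> cyc"
    by (auto simp: Aplus_rels_def vdiff_eq fa_gen_eq_single)
  then have S3: "k \<in> S3" "l \<in> S3" "m \<in> S3" and nonzero: "k \<noteq> 0" "l \<noteq> 0" "m \<noteq> 0"
    by (auto simp: cyc_def S3_def)
  then have gens: "g_delta \<in> gcar" "g_gen k \<in> gcar" "g_gen l \<in> gcar" "g_gen m \<in> gcar"
    and leaves: "single (Leaf k) \<in> FM S3" "single (Leaf l) \<in> FM S3" "single (Leaf m) \<in> FM S3"
    by (simp_all add: g_delta_eq g_gen_eq FM_single)
  have image: "fa_subst phi_letter (fa_comm (single [x]) (single [y])) =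
      fa_comm (single [g_letter x]) (single [g_letter y])" if "x \<in> {0,1,2,3}" "y \<in> {0,1,2,3}" for x y
    using that
    by (simp add: fa_subst_comm[OF FA_single FA_single phi_letter_FA] fa_subst_gen phi_letter_def)
  have "fa_subst phi_letter r =
      fa_comm (single [g_delta]) (single [g_gen k]) - fa_comm (single [g_gen l]) (single [g_gen m])"
    using klm nonzero by (auto simp: r cyc_def fa_subst_diff image g_letter_def)
  moreover have "g_bracket g_delta (g_gen k) = g_bracket (g_gen l) (g_gen m)"
    using klm leaves
    by (auto simp: g_delta_eq g_gen_eq g_bracket_g_elt fm_mult_single cyc_def fm_single_eq_single)
  ultimately have "fa_subst phi_letter r =
      (fa_comm (single [g_delta]) (single [g_gen k]) - single [g_bracket g_delta (g_gen k)])
      - (fa_comm (single [g_gen l]) (single [g_gen m]) - single [g_bracket (g_gen l) (g_gen m)])"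
    by simp
  also have "\<dots> \<in> U_ideal"
    using gens by (intro U_ideal_diff U_bracket_rel)
  finally show "fa_subst phi_letter r \<in> U_ideal" .
qed

lemma psi_U_bracket_rel:
  assumes "p \<in> FM S3" "q \<in> FM S3"
  shows "fa_comm (psi_letter (g_elt a p)) (psi_letter (g_elt d q)) - psi_letter (g_bracket (g_elt a p) (g_elt d q))
    = vscal a (fa_comm (single [0]) (comm_of q) - comm_of (fm_der q))
      - vscal d (fa_comm (single [0]) (comm_of p) - comm_of (fm_der p))"
proof -
  have fsupp: "fsupp p" "fsupp q" "fsupp (fm_der p)" "fsupp (fm_der q)"
    using assms by (simp_all add: FM_fsupp fsupp_fm_der)
  have "psi_letter (g_bracket (g_elt a p) (g_elt d q)) =
      vscal a (comm_of (fm_der q)) - vscal d (comm_of (fm_der p)) + fa_comm (comm_of p) (comm_of q)"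
    using assms fsupp
    by (simp add: g_bracket_g_elt psi_letter_g_elt fm_der_FM lin_ext_add lin_ext_vscal comm_of_fm_mult
        lin_ext_diff vscal_uminus_left)
  then show ?thesis
    using assms fa_comm_swap[of "comm_of p" "single [0]"]
    by (simp add: psi_letter_g_elt fa_comm_linear vscal_uminus vscal_diff algebra_simps)
qed

lemma psi_U_rels: "\<forall>r\<in>U_rels. fa_subst psi_letter r \<in> Aplus_ideal"
proof
  fix r assume "r \<in> U_rels"
  then consider (add) u v where "r = single [g_add u v] - (single [u] + single [v])" "u \<in> gcar" "v \<in> gcar"
    | (scal) c u where "r = single [g_scal c u] - vscal c (single [u])" "u \<in> gcar"
    | (bracket) u v where "r = fa_comm (single [u]) (single [v]) - single [g_bracket u v]" "u \<in> gcar" "v \<in> gcar"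
    unfolding U_rels_def fa_gen_eq_single vdiff_eq vadd_eq by blast
  then show "fa_subst psi_letter r \<in> Aplus_ideal"
  proof cases
    case add
    then obtain c p d q where "p \<in> FM S3" "u = g_elt c p" "q \<in> FM S3" "v = g_elt d q"
      by (auto simp: gcar_iff)
    moreover have "fa_subst psi_letter r = psi_letter (g_add u v) - (psi_letter u + psi_letter v)"
      using add by (simp add: fa_subst_diff fa_subst_add fa_subst_gen fsupp_psi_letter g_add_gcar)
    ultimately have "fa_subst psi_letter r = 0"
      by (simp add: g_add_g_elt psi_letter_g_elt lin_ext_add FM_fsupp vscal_add_left algebra_simps)
    then show ?thesis by (simp add: Aplus_ideal_def)
  next
    case scal
    then obtain d p where "p \<in> FM S3" "u = g_elt d p" by (auto simp: gcar_iff)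
    moreover have "fa_subst psi_letter r = psi_letter (g_scal c u) - vscal c (psi_letter u)"
      using scal by (simp add: fa_subst_diff fa_subst_vscal fa_subst_gen fsupp_psi_letter g_scal_gcar)
    ultimately have "fa_subst psi_letter r = 0"
      by (simp add: g_scal_g_elt psi_letter_g_elt lin_ext_vscal FM_fsupp vscal_add vscal_vscal)
    then show ?thesis by (simp add: Aplus_ideal_def)
  next
    case bracket
    then obtain a p d q where pq: "p \<in> FM S3" "u = g_elt a p" "q \<in> FM S3" "v = g_elt d q"
      by (auto simp: gcar_iff)
    have "fa_subst psi_letter r = fa_comm (psi_letter u) (psi_letter v) - psi_letter (g_bracket u v)"
      using bracket
      by (simp add: fa_subst_diff fa_subst_comm[OF FA_single FA_single psi_letter_FA] fa_subst_gen
          fsupp_psi_letter g_bracket_gcar)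
    also have "\<dots> \<in> Aplus_ideal"
      using pq by (simp add: psi_U_bracket_rel Aplus_ideal_diff Aplus_ideal_vscal nabla0_comm_of)
    finally show ?thesis .
  qed
qed

theorem mainTheorem9:
  shows "\<exists>\<phi>. quot_alg_iso {0,1,2,3} Aplus_ideal gcar U_ideal \<phi> \<and>
             vdiff (\<phi> (fa_gen 0)) (fa_gen g_delta) \<in> U_ideal \<and>
             (\<forall>k\<in>{1,2,3}. vdiff (\<phi> (fa_gen k)) (fa_gen (g_gen k)) \<in> U_ideal)"
proof (intro exI[of _ "fa_subst phi_letter"] conjI ballI)
  show "quot_alg_iso {0,1,2,3} Aplus_ideal gcar U_ideal (fa_subst phi_letter)"
    unfolding Aplus_ideal_def U_ideal_def
    using Aplus_rels_FA U_rels_FA phi_letter_FA psi_letter_FA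
      phi_Aplus_rels[unfolded U_ideal_def] psi_U_rels[unfolded Aplus_ideal_def]
      psi_phi_letter phi_psi_letter[unfolded U_ideal_def]
    by (rule quot_alg_iso_fa_subst)
  have gen_image: "fa_subst phi_letter (fa_gen x) = fa_gen (g_letter x)" if "x \<in> {0,1,2,3}" for x
    using that by (simp add: fa_gen_eq_single fa_subst_gen phi_letter_def)
  show "vdiff (fa_subst phi_letter (fa_gen 0)) (fa_gen g_delta) \<in> U_ideal"
    using gen_image[of 0] by (simp add: vdiff_eq g_letter_def U_ideal_def)
  fix k :: nat assume "k \<in> {1,2,3}"
  then show "vdiff (fa_subst phi_letter (fa_gen k)) (fa_gen (g_gen k)) \<in> U_ideal"
    using gen_image[of k] by (auto simp: vdiff_eq g_letter_def U_ideal_def)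
qed

end
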